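(* Let $\lambda>0$, $b\ge 0$, and let $(s_n)_{n\ge 1}$, $(a_n)_{n\ge 1}$ be real sequences with $s_n\in[0,1)$ for all $n$, $s\doteq\sup_{n}s_n<1$ and $A\doteq\sup_{n}a_n<\infty$. Consider the difference equation $$x_{n+1}=s_nx_n+x_{n-1}^{\lambda}e^{a_n-bx_n-x_{n-1}},\qquad n\ge 1,$$ with non-negative initial values $x_0,x_1$. (a) Every non-negative solution is eventually uniformly bounded: there is a constant $M$ depending only on $\lambda,A,s$ (e.g. $M=1+\lambda^{\lambda}e^{A-\lambda}/(1-s)$) such that for every non-negative solution $\{x_n\}$ one has $x_n\le M$ for all sufficiently large $n$. (b) Let $\lambda>1$ and $\rho=\exp\!\left(-\dfrac{A-\ln(1-s)}{\lambda-1}\right)$. If $\{x_n\}$ is a solution with $0\le x_0,x_1<\rho$, then $\lim_{n\to\infty}x_n=0$. (c) Let $\lambda>1$. If $A<\ln(1-s)+(\lambda-1)[1-\ln(\lambda-1)]$, then every non-negative solution converges to $0$.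
   Context: Solutions are real sequences $\{x_n\}_{n\ge0}$ generated by the recursion from the initial values $x_0,x_1$. *)

theory Defs
  imports Complex_Main
begin

text \<open>A (real) solution of
  x_{n+1} = s_n x_n + x_{n-1}^lam * exp(a_n - b x_n - x_{n-1}),  n \<ge> 1,
  generated from the initial values x 0, x 1.  The power is taken as powr,
  which for nonnegative bases and lam > 0 is the usual real power (0 powr lam = 0).\<close>
definition is_solution ::
  "real \<Rightarrow> real \<Rightarrow> (nat \<Rightarrow> real) \<Rightarrow> (nat \<Rightarrow> real) \<Rightarrow> (nat \<Rightarrow> real) \<Rightarrow> bool" where
  "is_solution lam b s a x \<longleftrightarrow>
     (\<forall>n\<ge>1. x (Suc n) = s n * x n + (x (n - 1)) powr lam * exp (a n - b * x n - x (n - 1)))"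

end

theory Submission
  imports Defs
begin

text \<open>With s and A the suprema of the coefficients, every nonnegative solution satisfies
  x(n+2) \<le> s x(n+1) + e^A \<phi>(x(n)),  where \<phi>(z) = z^\<lambda> e^(-z).
  (a) Since \<phi> \<le> \<lambda>^\<lambda> e^(-\<lambda>), the solution is dominated by an affine contraction.
  (b), (c) If \<phi>(z) \<le> k z along the solution with s + e^A k < 1, this two-step linear
  inequality forces geometric decay.  For (b) take k = q^(\<lambda>-1) with q = max x(0) x(1):
  q < \<rho> is exactly s + e^A k < 1, and it also keeps the solution in [0, q].  For (c) take
  k = max z^(\<lambda>-1) e^(-z) = (\<lambda>-1)^(\<lambda>-1) e^(1-\<lambda>).\<close>

lemma powr_times_exp_neg_le:
  fixes mu z :: real
  assumes "0 < mu" "0 \<le> z"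
  shows "z powr mu * exp (- z) \<le> mu powr mu * exp (- mu)"
proof (cases "z = 0")
  case True then show ?thesis by simp
next
  case False
  with assms have z: "z > 0" by simp
  have "ln (z / mu) \<le> z / mu - 1" using z assms by (intro ln_le_minus_one) simp
  then have "mu * (ln z - ln mu) \<le> z - mu"
    using z assms by (simp add: ln_div mult_left_mono field_simps)
  then have "exp (mu * ln z - z) \<le> exp (mu * ln mu - mu)" by (simp add: algebra_simps)
  then show ?thesis using z assms by (simp add: powr_def exp_diff exp_minus field_simps)
qed

lemma eventually_le_of_affine_contraction:
  fixes u :: "nat \<Rightarrow> real"
  assumes step: "\<And>n. u (Suc n) \<le> r * u n + c" and r: "0 \<le> r" "r < 1" and e: "e > 0"
  shows "\<forall>\<^sub>F n in sequentially. u n \<le> c / (1 - r) + e"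
proof -
  define K where "K = c / (1 - r)"
  define D where "D = max 0 (u 0 - K)"
  have fixpoint: "r * K + c = K" using r by (simp add: K_def field_simps)
  have bound: "u n \<le> K + r ^ n * D" for n
  proof (induction n)
    case 0 then show ?case by (simp add: D_def)
  next
    case (Suc n)
    have "u (Suc n) \<le> r * (K + r ^ n * D) + c" using step[of n] mult_left_mono[OF Suc r(1)] by linarith
    also have "\<dots> = K + r ^ Suc n * D" using fixpoint by (simp add: algebra_simps)
    finally show ?case .
  qed
  have "(\<lambda>n. r ^ n * D) \<longlonglongrightarrow> 0"
    using r by (intro tendsto_mult_left_zero LIMSEQ_power_zero) simp
  then have "\<forall>\<^sub>F n in sequentially. r ^ n * D < e" using e by (rule order_tendstoD)
  then show ?thesis
  proof eventually_elim
    case (elim n) then show ?case using bound[of n] unfolding K_def by linarith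
  qed
qed

lemma LIMSEQ_zero_of_two_step_contraction:
  fixes u :: "nat \<Rightarrow> real"
  assumes nonneg: "\<And>n. 0 \<le> u n" and p: "0 \<le> p" and q: "0 \<le> q" and pq: "p + q < 1"
    and step: "\<And>n. u (Suc (Suc n)) \<le> p * u (Suc n) + q * u n"
  shows "u \<longlonglongrightarrow> 0"
proof -
  define t where "t = sqrt (p + q)"
  define c where "c = max (u (Suc 0)) (u 0)"
  have t: "0 \<le> t" "t < 1" "t\<^sup>2 = p + q" using p q pq by (auto simp: t_def)
  have c: "0 \<le> c" using nonneg by (simp add: c_def le_max_iff_disj)
  have max_step: "u (Suc (Suc n)) \<le> t\<^sup>2 * max (u (Suc n)) (u n)" for n
  proof -
    have "p * u (Suc n) + q * u n \<le> p * max (u (Suc n)) (u n) + q * max (u (Suc n)) (u n)"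
      using p q by (intro add_mono mult_left_mono) auto
    then show ?thesis using step[of n] by (simp add: t(3) algebra_simps)
  qed
  have decay: "u (Suc n) \<le> c * t ^ n \<and> u (Suc (Suc n)) \<le> c * t ^ Suc n" for n
  proof (induction n)
    case 0
    have "t\<^sup>2 \<le> t" using t(1,2) by (simp add: power2_eq_square mult_left_le_one_le)
    then have "t\<^sup>2 * c \<le> t * c" using c by (rule mult_right_mono)
    then show ?case using max_step[of 0] by (simp add: c_def mult.commute)
  next
    case (Suc n)
    have "c * t ^ Suc n \<le> c * t ^ n" using t c by (simp add: mult_left_le_one_le mult_left_mono)
    then have "max (u (Suc (Suc n))) (u (Suc n)) \<le> c * t ^ n" using Suc by simp
    then have "t\<^sup>2 * max (u (Suc (Suc n))) (u (Suc n)) \<le> t\<^sup>2 * (c * t ^ n)"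
      by (simp add: mult_left_mono)
    then have "u (Suc (Suc (Suc n))) \<le> t\<^sup>2 * (c * t ^ n)"
      using max_step[of "Suc n"] by linarith
    then show ?case using Suc by (simp add: power2_eq_square algebra_simps)
  qed
  have geometric: "(\<lambda>n. c * t ^ n) \<longlonglongrightarrow> 0"
    using t by (intro tendsto_mult_right_zero LIMSEQ_power_zero) simp
  have "(\<lambda>n. u (Suc n)) \<longlonglongrightarrow> 0"
    by (rule tendsto_sandwich[OF _ _ tendsto_const geometric]) (use decay nonneg in simp_all)
  then show ?thesis by (rule LIMSEQ_imp_Suc)
qed

locale nonneg_solution =
  fixes lam b S A :: real and s a x :: "nat \<Rightarrow> real"
  assumes solution: "is_solution lam b s a x"
    and b_nonneg: "0 \<le> b"
    and s_nonneg: "\<And>n. n \<ge> 1 \<Longrightarrow> 0 \<le> s n" and s_le: "\<And>n. n \<ge> 1 \<Longrightarrow> s n \<le> S"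
    and S_less_1: "S < 1"
    and a_le: "\<And>n. n \<ge> 1 \<Longrightarrow> a n \<le> A"
    and x0_nonneg: "0 \<le> x 0" and x1_nonneg: "0 \<le> x 1"
begin

lemma S_nonneg: "0 \<le> S"
  using s_nonneg[of 1] s_le[of 1] by simp

lemma recurrence:
  "x (Suc (Suc n)) = s (Suc n) * x (Suc n) + x n powr lam * exp (a (Suc n) - b * x (Suc n) - x n)"
  using solution unfolding is_solution_def by (metis diff_Suc_1 le_add1 plus_1_eq_Suc)

lemma nonneg: "0 \<le> x n"
proof -
  have "0 \<le> x n \<and> 0 \<le> x (Suc n)"
  proof (induction n)
    case 0 then show ?case using x0_nonneg x1_nonneg by simp
  next
    case (Suc n) then show ?case using recurrence[of n] s_nonneg[of "Suc n"] by simp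
  qed
  then show ?thesis ..
qed

lemma step_le: "x (Suc (Suc n)) \<le> S * x (Suc n) + exp A * (x n powr lam * exp (- x n))"
proof -
  have "exp (a (Suc n) - b * x (Suc n) - x n) \<le> exp A * exp (- x n)"
    using a_le[of "Suc n"] mult_nonneg_nonneg[OF b_nonneg nonneg[of "Suc n"]] by (simp flip: exp_add)
  then have "x n powr lam * exp (a (Suc n) - b * x (Suc n) - x n) \<le> exp A * (x n powr lam * exp (- x n))"
    by (metis mult.left_commute mult_left_mono powr_ge_zero)
  moreover have "s (Suc n) * x (Suc n) \<le> S * x (Suc n)"
    using s_le[of "Suc n"] nonneg[of "Suc n"] by (simp add: mult_right_mono)
  ultimately show ?thesis using recurrence[of n] by simp
qed

lemma step_le_linear:
  assumes "x n powr lam * exp (- x n) \<le> k * x n"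
  shows "x (Suc (Suc n)) \<le> S * x (Suc n) + exp A * k * x n"
  using step_le[of n] mult_left_mono[OF assms exp_ge_zero, of A] unfolding mult.assoc by linarith

lemma eventually_bounded:
  assumes "lam > 0"
  shows "\<forall>\<^sub>F n in sequentially. x n \<le> 1 + lam powr lam * exp (A - lam) / (1 - S)"
proof -
  define C where "C = exp A * (lam powr lam * exp (- lam))"
  have "x (Suc (Suc n)) \<le> S * x (Suc n) + C" for n
    using step_le[of n] mult_left_mono[OF powr_times_exp_neg_le[OF assms nonneg[of n]] exp_ge_zero[of A]]
    unfolding C_def by linarith
  then have "\<forall>\<^sub>F n in sequentially. x (Suc n) \<le> C / (1 - S) + 1"
    using S_nonneg S_less_1 by (intro eventually_le_of_affine_contraction) auto
  also have "C / (1 - S) + 1 = 1 + lam powr lam * exp (A - lam) / (1 - S)"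
    by (simp add: C_def exp_diff exp_minus field_simps)
  finally show ?thesis by (rule eventually_sequentially_Suc[THEN iffD1])
qed

lemma LIMSEQ_zero_if_linear_growth:
  assumes growth: "\<And>n. x n powr lam * exp (- x n) \<le> k * x n"
    and k: "0 \<le> k" "exp A * k < 1 - S"
  shows "x \<longlonglongrightarrow> 0"
proof (rule LIMSEQ_zero_of_two_step_contraction)
  show "x (Suc (Suc n)) \<le> S * x (Suc n) + exp A * k * x n" for n
    by (rule step_le_linear[OF growth])
qed (use nonneg S_nonneg k in auto)

lemma LIMSEQ_zero_if_small_initial:
  assumes lam: "lam > 1"
    and small: "x 0 < exp (- ((A - ln (1 - S)) / (lam - 1)))"
      "x 1 < exp (- ((A - ln (1 - S)) / (lam - 1)))"
  shows "x \<longlonglongrightarrow> 0"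
proof -
  define q where "q = max (x 0) (x 1)"
  define k where "k = q powr (lam - 1)"
  have q: "0 \<le> q" using x0_nonneg by (simp add: q_def le_max_iff_disj)
  have "exp A * k < 1 - S"
  proof (cases "q = 0")
    case True then show ?thesis using S_less_1 by (simp add: k_def)
  next
    case False
    have "k < exp (- ((A - ln (1 - S)) / (lam - 1))) powr (lam - 1)"
      using False q small lam unfolding k_def q_def by (intro powr_less_mono2) auto
    also have "\<dots> = (1 - S) / exp A"
      using lam S_less_1 by (simp add: powr_def exp_diff)
    finally show ?thesis by (simp add: field_simps)
  qed
  then have k: "0 \<le> k" "exp A * k < 1 - S" by (auto simp: k_def)
  have growth: "z powr lam * exp (- z) \<le> k * z" if "0 \<le> z" "z \<le> q" for z
  proof -
    have "z powr lam * exp (- z) \<le> z * z powr (lam - 1)"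
      using that powr_mult_base[of z "lam - 1"] by (simp add: mult_left_le)
    also have "\<dots> \<le> z * k" unfolding k_def using that lam by (intro mult_left_mono powr_mono2) auto
    finally show ?thesis by (simp add: mult.commute)
  qed
  have invariant: "x n \<le> q \<and> x (Suc n) \<le> q" for n
  proof (induction n)
    case 0 then show ?case by (simp add: q_def)
  next
    case (Suc n)
    have "x (Suc (Suc n)) \<le> S * x (Suc n) + exp A * k * x n"
      using growth[OF nonneg Suc[THEN conjunct1]] by (rule step_le_linear)
    also have "\<dots> \<le> (S + exp A * k) * q"
      using Suc S_nonneg k(1) by (simp add: distrib_right add_mono mult_left_mono)
    also have "\<dots> \<le> q" using k q mult_right_mono[of "S + exp A * k" 1 q] by simp
    finally show ?case using Suc by simp
  qed
  show ?thesis
    using growth[OF nonneg invariant[THEN conjunct1]] k by (rule LIMSEQ_zero_if_linear_growth)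
qed

lemma LIMSEQ_zero_if_A_small:
  assumes lam: "lam > 1" and A_small: "A < ln (1 - S) + (lam - 1) * (1 - ln (lam - 1))"
  shows "x \<longlonglongrightarrow> 0"
proof (rule LIMSEQ_zero_if_linear_growth)
  define k where "k = (lam - 1) powr (lam - 1) * exp (- (lam - 1))"
  show "0 \<le> k" by (simp add: k_def)
  have "exp A * k = exp (A + (lam - 1) * ln (lam - 1) - (lam - 1))"
    using lam by (simp add: k_def powr_def exp_add exp_diff exp_minus field_simps)
  also have "\<dots> < exp (ln (1 - S))" using A_small by (simp add: algebra_simps)
  finally show "exp A * k < 1 - S" using S_less_1 by simp
  show "x n powr lam * exp (- x n) \<le> k * x n" for n
  proof -
    have "x n powr lam * exp (- x n) = x n * (x n powr (lam - 1) * exp (- x n))"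
      using powr_mult_base[OF nonneg, of n "lam - 1"] by simp
    also have "\<dots> \<le> x n * k" unfolding k_def
      using lam nonneg[of n] by (intro mult_left_mono powr_times_exp_neg_le) auto
    finally show ?thesis by (simp add: mult.commute)
  qed
qed

end

theorem mainTheorem1:
  fixes lam b :: real and s a :: "nat \<Rightarrow> real"
  assumes lam_pos: "lam > 0"
    and b_nonneg: "b \<ge> 0"
    and s_range: "\<forall>n\<ge>1. 0 \<le> s n \<and> s n < 1"
    and s_bdd: "bdd_above (s ` {1..})"
    and s_sup: "(SUP n\<in>{1..}. s n) < 1"
    and a_bdd: "bdd_above (a ` {1..})"
  shows
    "(\<forall>x. is_solution lam b s a x \<and> x 0 \<ge> 0 \<and> x 1 \<ge> 0 \<longrightarrow>
        (\<forall>\<^sub>F n in sequentially.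
           x n \<le> 1 + lam powr lam * exp ((SUP n\<in>{1..}. a n) - lam) / (1 - (SUP n\<in>{1..}. s n))))
     \<and> (lam > 1 \<longrightarrow>
        (\<forall>x. is_solution lam b s a x \<and> 0 \<le> x 0 \<and> 0 \<le> x 1
             \<and> x 0 < exp (- (((SUP n\<in>{1..}. a n) - ln (1 - (SUP n\<in>{1..}. s n))) / (lam - 1)))
             \<and> x 1 < exp (- (((SUP n\<in>{1..}. a n) - ln (1 - (SUP n\<in>{1..}. s n))) / (lam - 1)))
             \<longrightarrow> x \<longlonglongrightarrow> 0))
     \<and> (lam > 1 \<longrightarrow>
        (SUP n\<in>{1..}. a n) < ln (1 - (SUP n\<in>{1..}. s n)) + (lam - 1) * (1 - ln (lam - 1)) \<longrightarrow>
        (\<forall>x. is_solution lam b s a x \<and> x 0 \<ge> 0 \<and> x 1 \<ge> 0 \<longrightarrow> x \<longlonglongrightarrow> 0))"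
proof -
  define S where "S = (SUP n\<in>{1..}. s n)"
  define A where "A = (SUP n\<in>{1..}. a n)"
  have solution: "nonneg_solution lam b S A s a x"
    if "is_solution lam b s a x" "0 \<le> x 0" "0 \<le> x 1" for x
  proof
    show "s n \<le> S" "a n \<le> A" if "n \<ge> 1" for n
      unfolding S_def A_def using that s_bdd a_bdd by (auto intro: cSUP_upper)
  qed (use that b_nonneg s_range s_sup in \<open>auto simp: S_def\<close>)
  show ?thesis
    unfolding S_def[symmetric] A_def[symmetric]
  proof (intro conjI allI impI; elim conjE)
    show "\<forall>\<^sub>F n in sequentially. x n \<le> 1 + lam powr lam * exp (A - lam) / (1 - S)"
      if "is_solution lam b s a x" "0 \<le> x 0" "0 \<le> x 1" for x
      using solution[OF that] lam_pos by (rule nonneg_solution.eventually_bounded)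
    show "x \<longlonglongrightarrow> 0" if "1 < lam" "is_solution lam b s a x" "0 \<le> x 0" "0 \<le> x 1"
      "x 0 < exp (- ((A - ln (1 - S)) / (lam - 1)))" "x 1 < exp (- ((A - ln (1 - S)) / (lam - 1)))"
      for x
      using solution that by (meson nonneg_solution.LIMSEQ_zero_if_small_initial)
    show "x \<longlonglongrightarrow> 0" if "1 < lam" "A < ln (1 - S) + (lam - 1) * (1 - ln (lam - 1))"
      "is_solution lam b s a x" "0 \<le> x 0" "0 \<le> x 1" for x
      using solution that by (meson nonneg_solution.LIMSEQ_zero_if_A_small)
  qed
qed

end
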